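(* Let $X$ be a nonempty finite set. For all $\kappa,\lambda,\mu,\nu\in\mathcal{D}(X)$ and every $\omega\in\Omega(\lambda,\mu)$, there exists $\pi\in\Omega(\kappa,\nu)$ such that $d_{TV}(\omega,\pi)\le d_{TV}(\kappa,\lambda)+d_{TV}(\mu,\nu)$.
   Context: $\mathcal{D}(Y)$ is the set of probability distributions on a finite set $Y$. $\Omega(\mu,\nu)=\{\omega\in\mathcal{D}(X\times X)\mid\forall x:\sum_y\omega(x,y)=\mu(x),\ \sum_y\omega(y,x)=\nu(x)\}$. For distributions $\alpha,\beta$ on a finite set $Y$ (here $Y=X$ or $Y=X\times X$), $d_{TV}(\alpha,\beta)=\max_{y\in Y}|\alpha(y)-\beta(y)|$. *)

theory Defs
  imports Complex_Main
begin

definition distr :: "('y::finite \<Rightarrow> real) \<Rightarrow> bool" where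
  "distr p \<longleftrightarrow> (\<forall>y. 0 \<le> p y) \<and> (\<Sum>y\<in>UNIV. p y) = 1"

definition couplings :: "('x::finite \<Rightarrow> real) \<Rightarrow> ('x \<Rightarrow> real) \<Rightarrow> ('x \<times> 'x \<Rightarrow> real) set" where
  "couplings mu nu = {w. distr w \<and> (\<forall>x. (\<Sum>y\<in>UNIV. w (x, y)) = mu x)
                              \<and> (\<forall>x. (\<Sum>y\<in>UNIV. w (y, x)) = nu x)}"

text \<open>d_TV as defined in the paper: maximum pointwise absolute difference.\<close>
definition dTV :: "('y::finite \<Rightarrow> real) \<Rightarrow> ('y \<Rightarrow> real) \<Rightarrow> real" where
  "dTV a b = Max (range (\<lambda>y. \<bar>a y - b y\<bar>))"

end

theory Submission
  imports Defs
begin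

text \<open>To change the first marginal of a coupling \<omega> from \<lambda> to \<kappa>, thin every row x with
  \<lambda> x > \<kappa> x by the factor \<kappa> x / \<lambda> x, and spread the removed mass, keeping its column
  profile, over the rows with \<kappa> x > \<lambda> x in proportion to \<kappa> x - \<lambda> x. Every entry of row x
  moves by at most \<bar>\<kappa> x - \<lambda> x\<bar>, and the second marginal is untouched. Doing the same for the
  second marginal (on the transposed coupling) and adding the two deviations gives the bound.\<close>

lemma sum_UNIV_prod:
  fixes f :: "'a::finite \<times> 'b::finite \<Rightarrow> real"
  shows "(\<Sum>p\<in>UNIV. f p) = (\<Sum>x\<in>UNIV. \<Sum>y\<in>UNIV. f (x, y))"
  unfolding sum.cartesian_product UNIV_Times_UNIV by simp

lemma abs_le_dTV: "\<bar>a y - b y\<bar> \<le> dTV a b"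
  unfolding dTV_def by (rule Max_ge) auto

lemma dTV_leI:
  assumes "\<And>y. \<bar>a y - b y\<bar> \<le> c"
  shows "dTV a b \<le> c"
  unfolding dTV_def using assms by (subst Max_le_iff) auto

lemma dTV_commute: "dTV a b = dTV b a"
  unfolding dTV_def by (simp add: abs_minus_commute)

lemma couplings_swap:
  assumes "w \<in> couplings a b"
  shows "w \<circ> prod.swap \<in> couplings b a"
proof -
  have "\<forall>p. 0 \<le> w p" and "(\<Sum>x\<in>UNIV. \<Sum>y\<in>UNIV. w (x, y)) = 1"
    and "\<forall>x. (\<Sum>y\<in>UNIV. w (x, y)) = a x" and "\<forall>y. (\<Sum>x\<in>UNIV. w (x, y)) = b y"
    using assms unfolding couplings_def distr_def by (auto simp: sum_UNIV_prod)
  moreover have "(\<Sum>x\<in>UNIV. \<Sum>y\<in>UNIV. w (y, x)) = (\<Sum>x\<in>UNIV. \<Sum>y\<in>UNIV. w (x, y))"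
    by (rule sum.swap)
  ultimately show ?thesis
    unfolding couplings_def distr_def by (simp add: sum_UNIV_prod)
qed

context
  fixes kappa lambda mu :: "'x::finite \<Rightarrow> real" and omega :: "'x \<times> 'x \<Rightarrow> real"
  assumes kappa: "distr kappa" and lambda: "distr lambda"
    and omega: "omega \<in> couplings lambda mu"
begin

definition gain :: "'x \<Rightarrow> real" where
  "gain x = max 0 (kappa x - lambda x)"

definition loss :: "'x \<Rightarrow> real" where
  "loss x = max 0 (lambda x - kappa x)"

lemma gain_nonneg: "0 \<le> gain x"
  by (simp add: gain_def)

text \<open>Both divisions below may be by zero, but only where the numerator vanishes as well.\<close>
definition thin_rate :: "'x \<Rightarrow> real" where
  "thin_rate x = loss x / lambda x"

definition thinned_mass :: "'x \<Rightarrow> real" where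
  "thinned_mass y = (\<Sum>x\<in>UNIV. thin_rate x * omega (x, y))"

definition recouple_fst :: "'x \<times> 'x \<Rightarrow> real" where
  "recouple_fst p = omega p * (1 - thin_rate (fst p))
     + gain (fst p) * thinned_mass (snd p) / (\<Sum>x\<in>UNIV. gain x)"

lemma omega_nonneg: "0 \<le> omega p"
  using omega by (cases p) (simp add: couplings_def distr_def)

lemma omega_row_sum: "(\<Sum>y\<in>UNIV. omega (x, y)) = lambda x"
  and omega_col_sum: "(\<Sum>x\<in>UNIV. omega (x, y)) = mu y"
  using omega by (simp_all add: couplings_def)

lemma omega_le_lambda: "omega (x, y) \<le> lambda x"
proof -
  have "omega (x, y) \<le> (\<Sum>y\<in>UNIV. omega (x, y))"
    by (rule member_le_sum) (auto simp: omega_nonneg)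
  then show ?thesis by (simp add: omega_row_sum)
qed

lemma thin_rate_mult_lambda: "thin_rate x * lambda x = loss x"
  using kappa by (auto simp: thin_rate_def loss_def distr_def)

lemma thin_rate_bounds: "0 \<le> thin_rate x" "thin_rate x \<le> 1"
proof -
  have "0 \<le> kappa x" "0 \<le> lambda x"
    using kappa lambda by (simp_all add: distr_def)
  then show "0 \<le> thin_rate x" "thin_rate x \<le> 1"
    by (auto simp: thin_rate_def loss_def divide_le_eq)
qed

lemma thinned_mass_nonneg: "0 \<le> thinned_mass y"
  unfolding thinned_mass_def by (auto intro: sum_nonneg simp: thin_rate_bounds omega_nonneg)

lemma sum_gain_eq_sum_loss: "(\<Sum>x\<in>UNIV. gain x) = (\<Sum>x\<in>UNIV. loss x)"
proof -
  have "(\<Sum>x\<in>UNIV. gain x) - (\<Sum>x\<in>UNIV. loss x) = (\<Sum>x\<in>UNIV. kappa x - lambda x)"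
    unfolding sum_subtractf[symmetric] by (rule sum.cong) (auto simp: gain_def loss_def)
  then show ?thesis
    using kappa lambda by (simp add: sum_subtractf distr_def)
qed

lemma sum_thinned_mass: "(\<Sum>y\<in>UNIV. thinned_mass y) = (\<Sum>x\<in>UNIV. gain x)"
proof -
  have "(\<Sum>y\<in>UNIV. thinned_mass y) = (\<Sum>x\<in>UNIV. \<Sum>y\<in>UNIV. thin_rate x * omega (x, y))"
    unfolding thinned_mass_def by (rule sum.swap)
  also have "\<dots> = (\<Sum>x\<in>UNIV. thin_rate x * lambda x)"
    by (simp add: sum_distrib_left[symmetric] omega_row_sum)
  finally show ?thesis
    by (simp add: thin_rate_mult_lambda sum_gain_eq_sum_loss)
qed

lemma thinned_mass_le_sum_gain: "thinned_mass y \<le> (\<Sum>x\<in>UNIV. gain x)"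
proof -
  have "thinned_mass y \<le> (\<Sum>y\<in>UNIV. thinned_mass y)"
    by (rule member_le_sum) (auto simp: thinned_mass_nonneg)
  then show ?thesis by (simp add: sum_thinned_mass)
qed

lemma recouple_fst_nonneg: "0 \<le> recouple_fst p"
  unfolding recouple_fst_def
  by (intro add_nonneg_nonneg mult_nonneg_nonneg divide_nonneg_nonneg sum_nonneg)
     (simp_all add: omega_nonneg thin_rate_bounds thinned_mass_nonneg gain_nonneg)

lemma recouple_fst_row_sum: "(\<Sum>y\<in>UNIV. recouple_fst (x, y)) = kappa x"
proof -
  have "(\<Sum>y\<in>UNIV. recouple_fst (x, y)) = (1 - thin_rate x) * lambda x
      + gain x * (\<Sum>y\<in>UNIV. thinned_mass y) / (\<Sum>x\<in>UNIV. gain x)"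
    unfolding recouple_fst_def
    by (simp add: sum.distrib sum_distrib_left sum_distrib_right sum_divide_distrib
        omega_row_sum[symmetric] mult.commute)
  also have "gain x * (\<Sum>y\<in>UNIV. thinned_mass y) / (\<Sum>x\<in>UNIV. gain x) = gain x"
    using sum_nonneg_eq_0_iff[of UNIV gain] by (auto simp: sum_thinned_mass gain_nonneg)
  also have "(1 - thin_rate x) * lambda x = lambda x - loss x"
    using thin_rate_mult_lambda[of x] by (simp add: algebra_simps)
  finally show ?thesis
    by (simp add: gain_def loss_def max_def)
qed

lemma recouple_fst_col_sum: "(\<Sum>x\<in>UNIV. recouple_fst (x, y)) = mu y"
proof -
  have "(\<Sum>x\<in>UNIV. recouple_fst (x, y)) = (\<Sum>x\<in>UNIV. omega (x, y))
      - (\<Sum>x\<in>UNIV. thin_rate x * omega (x, y))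
      + (\<Sum>x\<in>UNIV. gain x) * thinned_mass y / (\<Sum>x\<in>UNIV. gain x)"
    unfolding recouple_fst_def
    by (simp add: sum.distrib sum_subtractf right_diff_distrib sum_distrib_right
        sum_divide_distrib mult.commute)
  also have "\<dots> = mu y"
    using thinned_mass_nonneg[of y] thinned_mass_le_sum_gain[of y]
    by (auto simp: omega_col_sum thinned_mass_def[symmetric])
  finally show ?thesis .
qed

lemma recouple_fst_couplings: "recouple_fst \<in> couplings kappa mu"
  using kappa recouple_fst_nonneg
  by (simp add: couplings_def distr_def sum_UNIV_prod recouple_fst_row_sum recouple_fst_col_sum)

lemma abs_recouple_fst_diff: "\<bar>omega (x, y) - recouple_fst (x, y)\<bar> \<le> \<bar>kappa x - lambda x\<bar>"
proof -
  have "omega (x, y) * thin_rate x \<le> lambda x * thin_rate x"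
    by (rule mult_right_mono[OF omega_le_lambda thin_rate_bounds(1)])
  also have "\<dots> = loss x"
    by (subst mult.commute) (rule thin_rate_mult_lambda)
  finally have removed: "omega (x, y) * thin_rate x \<le> loss x" .
  have added: "gain x * thinned_mass y / (\<Sum>x\<in>UNIV. gain x) \<le> gain x"
    using mult_left_mono[OF thinned_mass_le_sum_gain[of y] gain_nonneg[of x]]
      sum_nonneg[of UNIV gain] gain_nonneg
    by (cases "(\<Sum>x\<in>UNIV. gain x) = 0") (auto simp: divide_le_eq)
  have "omega (x, y) - recouple_fst (x, y)
      = omega (x, y) * thin_rate x - gain x * thinned_mass y / (\<Sum>x\<in>UNIV. gain x)"
    unfolding recouple_fst_def by (simp add: algebra_simps)
  moreover have "0 \<le> omega (x, y) * thin_rate x"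
    by (simp add: omega_nonneg thin_rate_bounds)
  moreover have "0 \<le> gain x * thinned_mass y / (\<Sum>x\<in>UNIV. gain x)"
    by (simp add: gain_nonneg thinned_mass_nonneg sum_nonneg)
  ultimately show ?thesis
    using removed added by (auto simp: gain_def loss_def abs_le_iff)
qed

lemma coupling_close_fst:
  "\<exists>w \<in> couplings kappa mu. \<forall>p. \<bar>omega p - w p\<bar> \<le> dTV kappa lambda"
  using recouple_fst_couplings abs_recouple_fst_diff abs_le_dTV order_trans
  by (metis prod.collapse)

end

lemma coupling_close_snd:
  assumes "distr mu" "distr nu" "omega \<in> couplings lambda mu"
  shows "\<exists>w \<in> couplings lambda nu. \<forall>p. \<bar>omega p - w p\<bar> \<le> dTV mu nu"
proof -
  obtain w where w: "w \<in> couplings nu lambda"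
    and close: "\<forall>p. \<bar>(omega \<circ> prod.swap) p - w p\<bar> \<le> dTV nu mu"
    using coupling_close_fst[OF assms(2,1) couplings_swap[OF assms(3)]] by blast
  have "\<bar>omega p - (w \<circ> prod.swap) p\<bar> \<le> dTV mu nu" for p
    using close[rule_format, of "prod.swap p"] by (simp add: dTV_commute)
  with couplings_swap[OF w] show ?thesis by blast
qed

theorem corollary1:
  fixes kappa lambda mu nu :: "'x::finite \<Rightarrow> real"
    and omega :: "'x \<times> 'x \<Rightarrow> real"
  assumes "distr kappa" and "distr lambda" and "distr mu" and "distr nu"
    and "omega \<in> couplings lambda mu"
  shows "\<exists>pi \<in> couplings kappa nu. dTV omega pi \<le> dTV kappa lambda + dTV mu nu"
proof -
  obtain w where w: "w \<in> couplings kappa mu"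
    and close_w: "\<forall>p. \<bar>omega p - w p\<bar> \<le> dTV kappa lambda"
    using coupling_close_fst[OF assms(1,2,5)] by blast
  obtain pi where pi: "pi \<in> couplings kappa nu"
    and close_pi: "\<forall>p. \<bar>w p - pi p\<bar> \<le> dTV mu nu"
    using coupling_close_snd[OF assms(3,4) w] by blast
  have "\<bar>omega p - pi p\<bar> \<le> dTV kappa lambda + dTV mu nu" for p
    using close_w[rule_format, of p] close_pi[rule_format, of p] by linarith
  with pi show ?thesis by (blast intro: dTV_leI)
qed

end
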